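(* Let $\mathbb{F}$ be any field and $\mathcal{H}=(Q_0,Q_1,\beta)$ a directed tensor-labeled hypergraph following a single standard construction. Then $\delta(\mathcal{H})=0$. In particular $\dim_{\mathbb{F}}\mathcal{Z}(\mathcal{H})=|Q_1|-|V_{\mathrm{macro}}|+c_{\mathrm{macro}}$.
   Context: $Q_0,Q_1$ finite; $T(\mathbb{F}^{Q_0})=\bigoplus_{k\ge0}(\mathbb{F}^{Q_0})^{\otimes k}$, with $v\in Q_0$ identified with $\mathbf{1}_v$ and $1$ the unit of $T^0=\mathbb{F}$. A directed tensor-labeled hypergraph is $\mathcal{H}=(Q_0,Q_1,\beta)$ with $\beta:\mathbb{F}^{Q_1}\to T(\mathbb{F}^{Q_0})\times T(\mathbb{F}^{Q_0})$ linear, $\beta(\mathbf{1}_e)=(A_e,B_e)$. $\partial_\beta:\mathbb{F}^{Q_1}\to T(\mathbb{F}^{Q_0})$, $\mathbf{1}_e\mapsto B_e-A_e$; $\mathcal{Z}(\mathcal{H})=\mathrm{Ker}\,\partial_\beta$. $V_{\mathrm{macro}}=\{A_e\}\cup\{B_e\}$; $\mathcal{H}_{\mathrm{macro}}$ is the directed multigraph on $V_{\mathrm{macro}}$ with edges $Q_1$, $e:A_e\to B_e$; $c_{\mathrm{macro}}$ its number of weakly connected components; $B_{\mathrm{macro}}:\mathbb{F}^{Q_1}\to\mathbb{F}^{V_{\mathrm{macro}}}$, $\mathbf{1}_e\mapsto\mathbf{1}_{B_e}-\mathbf{1}_{A_e}$; $\hat\phi:\mathbb{F}^{V_{\mathrm{macro}}}\to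 T(\mathbb{F}^{Q_0})$, $\mathbf{1}_w\mapsto w$; $\delta(\mathcal{H})=\dim(\mathrm{Im}B_{\mathrm{macro}}\cap\mathrm{Ker}\hat\phi)$. $\mathrm{Sym}_k(m_1\otimes\cdots\otimes m_k)=\sum_{\sigma\in S_k}m_{\sigma(1)}\otimes\cdots\otimes m_{\sigma(k)}$. Standard constructions: (1) $\psi:Q_1\to2^{Q_0}$, $1\le|\psi(e)|\le2$, $\beta(e)=(2(v\otimes v),1)$ if $\psi(e)=\{v\}$, $(u\otimes v+v\otimes u,1)$ if $\psi(e)=\{u,v\}$, $u\neq v$; (2) $s,t:Q_1\to Q_0$, $\beta(e)=(s(e),t(e))$; (3) multiset $\{\!\{u_1,\dots,u_k\}\!\}$, $k\ge1$, $\beta(e)=(\mathrm{Sym}_k(u_1\otimes\cdots\otimes u_k),1)$; (4) tuple $(u_1,\dots,u_k)$, $k\ge1$, $\beta(e)=(u_1\otimes\cdots\otimes u_k,1)$; (5) multisets of sizes $p,q\ge1$, $\beta(e)=(\mathrm{Sym}_p(u_1\otimes\cdots\otimes u_p),\mathrm{Sym}_q(v_1\otimes\cdots\otimes v_q))$; (6) tuples, $\beta(e)=(u_1\otimes\cdots\otimes u_p,w_1\otimes\cdots\otimes w_q)$, $p,q\ge1$. "Single standard construction": all hyperedges given by the same one of (1)–(6). *)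

theory Defs
  imports Complex_Main "HOL-Combinatorics.Permutations" "HOL-Library.Function_Algebras"
begin

text \<open>Tensor algebra T(F^Q0): an element is a coefficient function on words
  (lists) over the vertex type; the word [v1,...,vk] stands for the basis tensor
  v1 \<otimes> ... \<otimes> vk, the empty word for the unit 1 of T^0.\<close>

type_synonym ('v,'a) tensor = "'v list \<Rightarrow> 'a"

definition tw :: "'v list \<Rightarrow> ('v,'a::field) tensor" where
  "tw ws = (\<lambda>w. if w = ws then 1 else 0)"

definition tunit :: "('v,'a::field) tensor" where
  "tunit = tw []"

definition Sym :: "'v list \<Rightarrow> ('v,'a::field) tensor" where
  "Sym us = (\<Sum>\<sigma> \<in> {\<sigma>. \<sigma> permutes {0..<length us}}.
               tw (map (\<lambda>i. us ! \<sigma> i) [0..<length us]))"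

text \<open>A hypergraph is (Q0,Q1,A,B) with beta(1_e) = (A e, B e).\<close>

definition vmacro :: "'e set \<Rightarrow> ('e \<Rightarrow> ('v,'a) tensor) \<Rightarrow> ('e \<Rightarrow> ('v,'a) tensor)
    \<Rightarrow> ('v,'a) tensor set" where
  "vmacro Q1 A B = A ` Q1 \<union> B ` Q1"

text \<open>F^X as functions vanishing outside X.\<close>
definition fspace :: "'x set \<Rightarrow> ('x \<Rightarrow> 'a::zero) set" where
  "fspace X = {f. \<forall>x. x \<notin> X \<longrightarrow> f x = 0}"

definition boundary :: "'e set \<Rightarrow> ('e \<Rightarrow> ('v,'a::field) tensor) \<Rightarrow> ('e \<Rightarrow> ('v,'a) tensor)
    \<Rightarrow> ('e \<Rightarrow> 'a) \<Rightarrow> ('v,'a) tensor" where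
  "boundary Q1 A B x = (\<lambda>w. \<Sum>e\<in>Q1. x e * (B e w - A e w))"

definition cycle_space :: "'e set \<Rightarrow> ('e \<Rightarrow> ('v,'a::field) tensor) \<Rightarrow> ('e \<Rightarrow> ('v,'a) tensor)
    \<Rightarrow> ('e \<Rightarrow> 'a) set" where
  "cycle_space Q1 A B = {x \<in> fspace Q1. boundary Q1 A B x = 0}"

definition Bmacro :: "'e set \<Rightarrow> ('e \<Rightarrow> ('v,'a::field) tensor) \<Rightarrow> ('e \<Rightarrow> ('v,'a) tensor)
    \<Rightarrow> ('e \<Rightarrow> 'a) \<Rightarrow> (('v,'a) tensor \<Rightarrow> 'a)" where
  "Bmacro Q1 A B x = (\<lambda>t. \<Sum>e\<in>Q1. x e * ((if t = B e then 1 else 0) - (if t = A e then 1 else 0)))"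

definition phihat :: "('v,'a::field) tensor set \<Rightarrow> (('v,'a) tensor \<Rightarrow> 'a) \<Rightarrow> ('v,'a) tensor" where
  "phihat V f = (\<lambda>w. \<Sum>t\<in>V. f t * t w)"

definition fdim :: "('x \<Rightarrow> 'a::field) set \<Rightarrow> nat" where
  "fdim S = vector_space.dim (\<lambda>c f x. c * f x) S"

lemma fun_vector_space: "vector_space (\<lambda>(c::'a::field) (f::'x \<Rightarrow> 'a) x. c * f x)"
  by unfold_locales (auto simp: algebra_simps fun_eq_iff)

definition delta :: "'e set \<Rightarrow> ('e \<Rightarrow> ('v,'a::field) tensor) \<Rightarrow> ('e \<Rightarrow> ('v,'a) tensor) \<Rightarrow> nat" where
  "delta Q1 A B = fdim (Bmacro Q1 A B ` fspace Q1
      \<inter> {f \<in> fspace (vmacro Q1 A B). phihat (vmacro Q1 A B) f = 0})"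

definition c_macro :: "'e set \<Rightarrow> ('e \<Rightarrow> ('v,'a) tensor) \<Rightarrow> ('e \<Rightarrow> ('v,'a) tensor) \<Rightarrow> nat" where
  "c_macro Q1 A B =
     (let R = {(A e, B e) | e. e \<in> Q1} in
      card (vmacro Q1 A B // ((R \<union> R\<inverse>)\<^sup>*)))"

definition std_construction :: "nat \<Rightarrow> 'v set \<Rightarrow> 'e set \<Rightarrow> ('e \<Rightarrow> ('v,'a::field) tensor)
    \<Rightarrow> ('e \<Rightarrow> ('v,'a) tensor) \<Rightarrow> bool" where
  "std_construction i Q0 Q1 A B =
    (if i = 1 then
       (\<exists>\<psi>. \<forall>e\<in>Q1. \<psi> e \<subseteq> Q0 \<and> 1 \<le> card (\<psi> e) \<and> card (\<psi> e) \<le> 2 \<and>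
          (\<forall>v. \<psi> e = {v} \<longrightarrow> A e = (\<lambda>w. 2 * tw [v,v] w) \<and> B e = tunit) \<and>
          (\<forall>u v. \<psi> e = {u,v} \<and> u \<noteq> v \<longrightarrow> A e = tw [u,v] + tw [v,u] \<and> B e = tunit))
     else if i = 2 then
       (\<exists>s t. \<forall>e\<in>Q1. s e \<in> Q0 \<and> t e \<in> Q0 \<and> A e = tw [s e] \<and> B e = tw [t e])
     else if i = 3 then
       (\<exists>U. \<forall>e\<in>Q1. U e \<noteq> {#} \<and> set_mset (U e) \<subseteq> Q0 \<and>
          (\<exists>us. mset us = U e \<and> A e = Sym us) \<and> B e = tunit)
     else if i = 4 then
       (\<exists>U. \<forall>e\<in>Q1. U e \<noteq> [] \<and> set (U e) \<subseteq> Q0 \<and> A e = tw (U e) \<and> B e = tunit)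
     else if i = 5 then
       (\<exists>U W. \<forall>e\<in>Q1. U e \<noteq> {#} \<and> set_mset (U e) \<subseteq> Q0 \<and>
          W e \<noteq> {#} \<and> set_mset (W e) \<subseteq> Q0 \<and>
          (\<exists>us. mset us = U e \<and> A e = Sym us) \<and> (\<exists>ws. mset ws = W e \<and> B e = Sym ws))
     else if i = 6 then
       (\<exists>U W. \<forall>e\<in>Q1. U e \<noteq> [] \<and> set (U e) \<subseteq> Q0 \<and> W e \<noteq> [] \<and> set (W e) \<subseteq> Q0 \<and>
          A e = tw (U e) \<and> B e = tw (W e))
     else False)"

definition single_standard_construction :: "'v set \<Rightarrow> 'e set \<Rightarrow> ('e \<Rightarrow> ('v,'a::field) tensor)
    \<Rightarrow> ('e \<Rightarrow> ('v,'a) tensor) \<Rightarrow> bool" where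
  "single_standard_construction Q0 Q1 A B = (\<exists>i\<in>{1..6}. std_construction i Q0 Q1 A B)"

end

theory Submission
  imports Defs
begin

text \<open>
  Every label of a hyperedge built by a single standard construction is a basis word \<open>tw w\<close> or a
  symmetrisation \<open>Sym w\<close> (the labels \<open>2 v\<otimes>v\<close> and \<open>u\<otimes>v + v\<otimes>u\<close> of construction (1) are
  \<open>Sym [v, v]\<close> and \<open>Sym [u, v]\<close>), and two such labels are equal or have disjoint supports.
  Hence \<open>phihat\<close> is injective on the functions on \<open>V_macro\<close> whose values sum to zero, a space
  containing the image of \<open>Bmacro\<close>. This gives \<open>\<delta> = 0\<close>, and since the boundary map factors as
  \<open>phihat \<circ> Bmacro\<close>, the cycle space is the kernel of the incidence map of the multigraph
  \<open>H_macro\<close>. That kernel has dimension \<open>|Q1| - |V_macro| + c_macro\<close> by induction on the edges: an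
  edge whose endpoints are already connected closes one new independent cycle, while any other
  edge lies on no cycle and merges two components.
\<close>

section \<open>Supports of the hyperedge labels\<close>

lemma sum_fun_apply: "(\<Sum>i\<in>I. f i) x = (\<Sum>i\<in>I. f i x)"
  by (induction I rule: infinite_finite_induct) auto

lemma tw_apply_eq_0_iff [simp]: "tw l w = (0::'a::field) \<longleftrightarrow> w \<noteq> l"
  by (simp add: tw_def)

lemma Sym_permute_list:
  "Sym us = (\<Sum>\<sigma> | \<sigma> permutes {..<length us}. tw (permute_list \<sigma> us))"
  by (simp add: Sym_def permute_list_def atLeast0LessThan)

lemma Sym_Nil: "Sym [] = tunit"
  by (simp add: Sym_def tunit_def)

lemma Sym_pair: "Sym [u, v] = tw [u, v] + tw [v, u]"
proof -
  have "{..<length [u, v]} = insert 0 {Suc 0}" by auto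
  then show ?thesis
    by (simp add: Sym_permute_list sum_over_permutations_insert permute_list_def
        transpose_def add.commute)
qed

lemma Sym_apply_neq_0_imp_mset_eq:
  assumes "Sym us w \<noteq> (0::'a::field)"
  shows "mset w = mset us"
proof -
  have "(\<Sum>\<sigma> | \<sigma> permutes {..<length us}. tw (permute_list \<sigma> us) w) \<noteq> (0::'a)"
    using assms by (simp add: Sym_permute_list sum_fun_apply)
  then obtain \<sigma> where "\<sigma> permutes {..<length us}" "w = permute_list \<sigma> us"
    by (auto elim: sum.not_neutral_contains_not_neutral)
  then show ?thesis by simp
qed

lemma Sym_cong_mset:
  assumes "mset us = mset vs"
  shows "Sym us = Sym vs"
proof -
  obtain q where q: "q permutes {..<length vs}" "permute_list q vs = us"
    using mset_eq_permutation[OF assms] by blast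
  have "Sym us = (\<Sum>\<sigma> | \<sigma> permutes {..<length vs}. tw (permute_list \<sigma> (permute_list q vs)))"
    using q mset_eq_length[OF assms] by (simp add: Sym_permute_list)
  also have "\<dots> = (\<Sum>\<sigma> | \<sigma> permutes {..<length vs}. tw (permute_list (q \<circ> \<sigma>) vs))"
    by (intro sum.cong refl) (simp add: permute_list_compose)
  also have "\<dots> = Sym vs"
    unfolding Sym_permute_list by (rule setum_permutations_compose_left[OF q(1), symmetric])
  finally show ?thesis .
qed

definition disjoint_supports :: "('w \<Rightarrow> 'a::zero) set \<Rightarrow> bool" where
  "disjoint_supports V \<longleftrightarrow> pairwise (\<lambda>f g. disjnt {w. f w \<noteq> 0} {w. g w \<noteq> 0}) V"

lemma disjoint_supports_iff:
  "disjoint_supports V \<longleftrightarrow> (\<forall>f\<in>V. \<forall>g\<in>V. \<forall>w. f w \<noteq> 0 \<longrightarrow> g w \<noteq> 0 \<longrightarrow> f = g)"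
  unfolding disjoint_supports_def pairwise_def disjnt_def by blast

lemma disjoint_supports_subset: "disjoint_supports V \<Longrightarrow> U \<subseteq> V \<Longrightarrow> disjoint_supports U"
  unfolding disjoint_supports_def by (rule pairwise_subset)

lemma disjoint_supports_range_tw: "disjoint_supports (range tw :: ('v,'a::field) tensor set)"
  unfolding disjoint_supports_iff by auto

lemma disjoint_supports_range_Sym: "disjoint_supports (range Sym :: ('v,'a::field) tensor set)"
  unfolding disjoint_supports_iff by (auto dest!: Sym_apply_neq_0_imp_mset_eq intro: Sym_cong_mset)

lemma std_construction_labels:
  assumes "std_construction i Q0 Q1 A (B :: 'e \<Rightarrow> ('v,'a::field) tensor)"
  shows "A ` Q1 \<union> B ` Q1 \<subseteq> range tw \<or> A ` Q1 \<union> B ` Q1 \<subseteq> range Sym"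
proof -
  have "i \<in> {1..6}"
    using assms by (auto simp: std_construction_def split: if_splits)
  then consider "i = 1" | "i = 3 \<or> i = 5" | "i = 2 \<or> i = 4 \<or> i = 6" by fastforce
  then show ?thesis
  proof cases
    case 1
    then obtain \<psi> where \<psi>: "\<forall>e\<in>Q1. 1 \<le> card (\<psi> e) \<and> card (\<psi> e) \<le> 2 \<and>
          (\<forall>v. \<psi> e = {v} \<longrightarrow> A e = (\<lambda>w. 2 * tw [v,v] w) \<and> B e = tunit) \<and>
          (\<forall>u v. \<psi> e = {u,v} \<and> u \<noteq> v \<longrightarrow> A e = tw [u,v] + tw [v,u] \<and> B e = tunit)"
      using assms 1 by (simp add: std_construction_def) blast
    have "A e \<in> range Sym \<and> B e \<in> range Sym" if "e \<in> Q1" for e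
    proof -
      have "card (\<psi> e) = 1 \<or> card (\<psi> e) = 2" using \<psi> that by fastforce
      then consider v where "\<psi> e = {v}" | u v where "\<psi> e = {u, v}" "u \<noteq> v"
        by (metis card_1_singletonE card_2_iff)
      then show ?thesis
      proof cases
        case (1 v)
        then have "A e = Sym [v, v]" "B e = Sym []"
          using \<psi> that by (auto simp: Sym_pair Sym_Nil fun_eq_iff)
        then show ?thesis by simp
      next
        case (2 u v)
        then have "A e = Sym [u, v]" "B e = Sym []"
          using \<psi> that by (auto simp: Sym_pair Sym_Nil)
        then show ?thesis by simp
      qed
    qed
    then show ?thesis by blast
  next
    case 2
    then have "A ` Q1 \<union> B ` Q1 \<subseteq> range Sym"
      using assms unfolding std_construction_def by (fastforce simp flip: Sym_Nil)
    then show ?thesis ..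
  next
    case 3
    then have "A ` Q1 \<union> B ` Q1 \<subseteq> range tw"
      using assms unfolding std_construction_def tunit_def by fastforce
    then show ?thesis ..
  qed
qed

lemma disjoint_supports_vmacro:
  assumes "single_standard_construction Q0 Q1 A B"
  shows "disjoint_supports (vmacro Q1 A B)"
proof -
  obtain i where "std_construction i Q0 Q1 A B"
    using assms unfolding single_standard_construction_def by blast
  then have "vmacro Q1 A B \<subseteq> range tw \<or> vmacro Q1 A B \<subseteq> range Sym"
    unfolding vmacro_def by (rule std_construction_labels)
  then show ?thesis
  proof
    assume "vmacro Q1 A B \<subseteq> range tw"
    then show ?thesis by (rule disjoint_supports_subset[OF disjoint_supports_range_tw])
  next
    assume "vmacro Q1 A B \<subseteq> range Sym"
    then show ?thesis by (rule disjoint_supports_subset[OF disjoint_supports_range_Sym])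
  qed
qed

text \<open>A label may be the zero tensor (\<open>Sym [v, v] = 0\<close> in characteristic 2); \<open>phihat\<close> cannot see
  its coefficient, which is why the values of \<open>f\<close> must sum to zero.\<close>

lemma phihat_eq_0_imp_eq_0:
  assumes "finite V" "disjoint_supports V" "f \<in> fspace V" "sum f V = 0" "phihat V f = 0"
  shows "f = 0"
proof -
  have off_zero: "f t = 0" if "t \<noteq> 0" for t
  proof (cases "t \<in> V")
    case True
    obtain w where w: "t w \<noteq> 0" using \<open>t \<noteq> 0\<close> by (auto simp: fun_eq_iff)
    have "(\<Sum>t'\<in>V - {t}. f t' * t' w) = 0"
      using assms(2) True w by (intro sum.neutral) (auto simp: disjoint_supports_iff)
    then have "phihat V f w = f t * t w"
      unfolding phihat_def using sum.remove[OF assms(1) True, of "\<lambda>t'. f t' * t' w"] by simp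
    then show ?thesis using assms(5) w by simp
  next
    case False
    then show ?thesis using assms(3) by (simp add: fspace_def)
  qed
  have "f 0 = sum f V"
  proof (cases "0 \<in> V")
    case True
    then show ?thesis using sum.remove[OF assms(1) True, of f] off_zero by simp
  next
    case False
    moreover have "sum f V = 0" using False off_zero by (intro sum.neutral) metis
    ultimately show ?thesis using assms(3) by (simp add: fspace_def)
  qed
  then show ?thesis using assms(4) off_zero by (metis zero_fun_apply ext)
qed

section \<open>The incidence map\<close>

definition incidence :: "'e set \<Rightarrow> ('e \<Rightarrow> 'x) \<Rightarrow> ('e \<Rightarrow> 'x) \<Rightarrow> ('e \<Rightarrow> 'a::field) \<Rightarrow> 'x \<Rightarrow> 'a" where
  "incidence Q s t x = (\<lambda>v. \<Sum>e\<in>Q. x e * ((if v = t e then 1 else 0) - (if v = s e then 1 else 0)))"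

lemma Bmacro_eq_incidence: "Bmacro = incidence"
  by (simp add: fun_eq_iff Bmacro_def incidence_def)

lemma incidence_in_fspace: "incidence Q s t x \<in> fspace (s ` Q \<union> t ` Q)"
  unfolding fspace_def incidence_def by (auto intro!: sum.neutral)

lemma incidence_add: "incidence Q s t (x + y) = incidence Q s t x + incidence Q s t y"
  by (simp add: fun_eq_iff incidence_def sum.distrib distrib_right)

lemma incidence_diff: "incidence Q s t (x - y) = incidence Q s t x - incidence Q s t y"
  by (simp add: fun_eq_iff incidence_def sum_subtractf left_diff_distrib)

lemma incidence_scale: "incidence Q s t (\<lambda>e. c * x e) = (\<lambda>v. c * incidence Q s t x v)"
  by (simp add: fun_eq_iff incidence_def sum_distrib_left mult.assoc)

lemma incidence_indicator:
  assumes "finite Q" "e \<in> Q"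
  shows "incidence Q s t (\<lambda>e'. if e' = e then c else 0) =
    (\<lambda>v. c * ((if v = t e then 1 else 0) - (if v = s e then 1 else 0)))"
proof
  fix v
  have "incidence Q s t (\<lambda>e'. if e' = e then c else 0) v =
      (\<Sum>e'\<in>Q. if e' = e then c * ((if v = t e' then 1 else 0) - (if v = s e' then 1 else 0)) else 0)"
    unfolding incidence_def by (intro sum.cong) auto
  then show "incidence Q s t (\<lambda>e'. if e' = e then c else 0) v =
      c * ((if v = t e then 1 else 0) - (if v = s e then 1 else 0))"
    using assms by simp
qed

lemma incidence_insert_coordinate_eq_0:
  "x e = 0 \<Longrightarrow> incidence (insert e F) s t x = incidence F s t x"
  by (cases "finite F \<and> e \<notin> F") (auto simp: incidence_def fun_eq_iff insert_absorb)

lemma sum_incidence_mult: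
  assumes "finite V"
  shows "(\<Sum>v\<in>V. incidence Q s t x v * g v) =
    (\<Sum>e\<in>Q. x e * ((if t e \<in> V then g (t e) else 0) - (if s e \<in> V then g (s e) else 0)))"
proof -
  have "(\<Sum>v\<in>V. incidence Q s t x v * g v) =
      (\<Sum>v\<in>V. \<Sum>e\<in>Q. x e * ((if v = t e then g v else 0) - (if v = s e then g v else 0)))"
    unfolding incidence_def sum_distrib_right by (intro sum.cong refl) (simp add: algebra_simps)
  also have "\<dots> = (\<Sum>e\<in>Q. x e * ((\<Sum>v\<in>V. if v = t e then g v else 0) - (\<Sum>v\<in>V. if v = s e then g v else 0)))"
    by (subst sum.swap) (simp add: sum_subtractf flip: sum_distrib_left)
  finally show ?thesis using assms by simp
qed

lemma sum_incidence_eq_0: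
  assumes "finite Q"
  shows "(\<Sum>v\<in>s ` Q \<union> t ` Q. incidence Q s t x v) = 0"
  using sum_incidence_mult[of "s ` Q \<union> t ` Q" Q s t x "\<lambda>_. 1"] assms by simp

lemma boundary_eq_phihat_Bmacro:
  assumes "finite Q1"
  shows "boundary Q1 A B x = phihat (vmacro Q1 A B) (Bmacro Q1 A B x)"
  using assms
  by (auto simp: fun_eq_iff boundary_def phihat_def vmacro_def Bmacro_eq_incidence sum_incidence_mult
      intro!: sum.cong)

lemma phihat_Bmacro_eq_0_iff:
  assumes "finite Q1" "disjoint_supports (vmacro Q1 A B)"
  shows "phihat (vmacro Q1 A B) (Bmacro Q1 A B x) = 0 \<longleftrightarrow> Bmacro Q1 A B x = 0"
proof
  assume "phihat (vmacro Q1 A B) (Bmacro Q1 A B x) = 0"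
  moreover have "finite (vmacro Q1 A B)" using assms(1) by (simp add: vmacro_def)
  ultimately show "Bmacro Q1 A B x = 0"
    using phihat_eq_0_imp_eq_0[OF _ assms(2)] incidence_in_fspace sum_incidence_eq_0[OF assms(1)]
    unfolding vmacro_def Bmacro_eq_incidence by blast
qed (simp add: phihat_def fun_eq_iff)

lemma quotient_eq_image: "A // R = (\<lambda>v. R``{v}) ` A"
  by (auto simp: quotient_def)

lemma card_insert_diff_card_quotient:
  assumes "finite V" "equiv UNIV R" "\<And>v w. (v, w) \<in> R \<Longrightarrow> w = v \<or> w \<in> V"
  shows "int (card (insert z V)) - int (card (insert z V // R)) = int (card V) - int (card (V // R))"
proof (cases "z \<in> V")
  case False
  have refl: "(v, v) \<in> R" for v using assms(2) by (simp add: equiv_def refl_on_def)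
  have "R``{z} = {z}"
    using assms(2,3) False refl unfolding equiv_def by (auto dest: symD)
  then have "insert z V // R = insert {z} (V // R)" by (simp add: quotient_eq_image)
  moreover have "{z} \<notin> V // R"
  proof
    assume "{z} \<in> V // R"
    then obtain v where "v \<in> V" "{z} = R``{v}" unfolding quotient_eq_image by blast
    then show False using refl[of v] False by auto
  qed
  moreover have "finite (V // R)" using assms(1) by (simp add: quotient_eq_image)
  ultimately show ?thesis using False assms(1) by simp
qed (simp add: insert_absorb)

lemma rtrancl_insert_sym_edge:
  assumes "sym S"
  shows "(x, y) \<in> (S \<union> {(a, b), (b, a)})\<^sup>* \<longleftrightarrow>
    (x, y) \<in> S\<^sup>* \<or> (x, a) \<in> S\<^sup>* \<and> (b, y) \<in> S\<^sup>* \<or> (x, b) \<in> S\<^sup>* \<and> (a, y) \<in> S\<^sup>*"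
proof
  have sym: "(v, w) \<in> S\<^sup>* \<Longrightarrow> (w, v) \<in> S\<^sup>*" for v w
    by (rule symD[OF sym_rtrancl[OF assms]])
  assume "(x, y) \<in> (S \<union> {(a, b), (b, a)})\<^sup>*"
  then show "(x, y) \<in> S\<^sup>* \<or> (x, a) \<in> S\<^sup>* \<and> (b, y) \<in> S\<^sup>* \<or> (x, b) \<in> S\<^sup>* \<and> (a, y) \<in> S\<^sup>*"
  proof (induction rule: rtrancl_induct)
    case (step y z)
    then show ?case
      by (auto intro: rtrancl_into_rtrancl rtrancl_trans sym)
  qed simp
next
  have "S\<^sup>* \<subseteq> (S \<union> {(a, b), (b, a)})\<^sup>*" by (rule rtrancl_mono) blast
  moreover have "(a, b) \<in> (S \<union> {(a, b), (b, a)})\<^sup>*" "(b, a) \<in> (S \<union> {(a, b), (b, a)})\<^sup>*" by auto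
  ultimately show "(x, y) \<in> S\<^sup>* \<or> (x, a) \<in> S\<^sup>* \<and> (b, y) \<in> S\<^sup>* \<or> (x, b) \<in> S\<^sup>* \<and> (a, y) \<in> S\<^sup>* \<Longrightarrow>
      (x, y) \<in> (S \<union> {(a, b), (b, a)})\<^sup>*"
    by (meson rtrancl_trans subsetD)
qed

lemma card_quotient_rtrancl_insert_sym_edge:
  assumes "sym S" "finite W" "a \<in> W" "b \<in> W" "(a, b) \<notin> S\<^sup>*"
  shows "card (W // (S \<union> {(a, b), (b, a)})\<^sup>*) + 1 = card (W // S\<^sup>*)"
proof -
  define R where "R = S\<^sup>*"
  define U where "U = R``{a} \<union> R``{b}"
  define Others where "Others = (\<lambda>v. R``{v}) ` {v \<in> W. (v, a) \<notin> R \<and> (v, b) \<notin> R}"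
  have ab: "(a, b) \<notin> R" using assms(5) by (simp add: R_def)
  have refl: "(v, v) \<in> R" for v by (simp add: R_def)
  have sym: "(v, w) \<in> R \<Longrightarrow> (w, v) \<in> R" for v w
    unfolding R_def by (rule symD[OF sym_rtrancl[OF assms(1)]])
  have same: "(v, y) \<in> R \<longleftrightarrow> (w, y) \<in> R" if "(v, w) \<in> R" for v w y
    using that sym unfolding R_def by (meson rtrancl_trans)
  have class_eq_iff: "R``{v} = R``{w} \<longleftrightarrow> (v, w) \<in> R" for v w
  proof
    assume "R``{v} = R``{w}"
    then show "(v, w) \<in> R" using refl[of w] by (simp add: set_eq_iff)
  next
    assume "(v, w) \<in> R"
    then show "R``{v} = R``{w}" using same by (simp add: set_eq_iff)
  qed
  have class': "(S \<union> {(a, b), (b, a)})\<^sup>*``{v} = (if (v, a) \<in> R \<or> (v, b) \<in> R then U else R``{v})" for v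
  proof -
    have class'_eq: "(S \<union> {(a, b), (b, a)})\<^sup>*``{v} =
        {y. (v, y) \<in> R \<or> (v, a) \<in> R \<and> (b, y) \<in> R \<or> (v, b) \<in> R \<and> (a, y) \<in> R}"
      unfolding R_def using rtrancl_insert_sym_edge[OF assms(1)] by blast
    consider "(v, a) \<in> R" "(v, b) \<notin> R" | "(v, b) \<in> R" "(v, a) \<notin> R" | "(v, a) \<notin> R" "(v, b) \<notin> R"
      using ab same by blast
    then show ?thesis
    proof cases
      case 1
      then show ?thesis unfolding class'_eq U_def using same[OF 1(1)] by auto
    next
      case 2
      then show ?thesis unfolding class'_eq U_def using same[OF 2(1)] by auto
    next
      case 3
      then show ?thesis unfolding class'_eq by auto
    qed
  qed
  have "W // R = insert (R``{a}) (insert (R``{b}) Others)"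
  proof (intro equalityI subsetI)
    fix C assume "C \<in> W // R"
    then obtain v where "v \<in> W" "C = R``{v}" by (auto simp: quotient_eq_image)
    then show "C \<in> insert (R``{a}) (insert (R``{b}) Others)"
      unfolding Others_def by (simp add: class_eq_iff) blast
  qed (use assms(3,4) in \<open>auto simp: quotient_eq_image Others_def\<close>)
  moreover have "W // (S \<union> {(a, b), (b, a)})\<^sup>* = insert U Others"
  proof (intro equalityI subsetI)
    fix C assume "C \<in> W // (S \<union> {(a, b), (b, a)})\<^sup>*"
    then obtain v where "v \<in> W" "C = (if (v, a) \<in> R \<or> (v, b) \<in> R then U else R``{v})"
      unfolding quotient_eq_image class' by blast
    then show "C \<in> insert U Others"
      unfolding Others_def by auto
  next
    fix C assume "C \<in> insert U Others"
    then show "C \<in> W // (S \<union> {(a, b), (b, a)})\<^sup>*"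
      using assms(3) refl unfolding quotient_eq_image class' Others_def by force
  qed
  moreover have "R``{a} \<notin> insert (R``{b}) Others" "R``{b} \<notin> Others" "U \<notin> Others"
    using ab sym refl unfolding Others_def U_def by (auto simp: class_eq_iff)
  moreover have "finite Others" unfolding Others_def using assms(2) by simp
  ultimately show ?thesis unfolding R_def by simp
qed

section \<open>The cycle space of a multigraph\<close>

interpretation FV: vector_space "\<lambda>(c::'a::field) (f::'x \<Rightarrow> 'a) x. c * f x"
  by (rule fun_vector_space)

lemma dim_zero_space: "FV.dim {0 :: 'x \<Rightarrow> 'a::field} = 0"
  by (rule FV.dim_unique[of "{}"]) (auto simp: FV.independent_empty)

lemma fspace_subset_span_indicators:
  assumes "finite Q"
  shows "fspace Q \<subseteq> FV.span ((\<lambda>e e'. if e' = e then 1 else (0::'a::field)) ` Q)"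
proof
  fix x :: "_ \<Rightarrow> 'a" assume x: "x \<in> fspace Q"
  have "x = (\<Sum>e\<in>Q. (\<lambda>e'. x e * (if e' = e then 1 else 0)))"
    using assms x by (auto simp: fun_eq_iff sum_fun_apply fspace_def if_distrib cong: if_cong)
  also have "\<dots> \<in> FV.span ((\<lambda>e e'. if e' = e then 1 else 0) ` Q)"
    by (intro FV.span_sum FV.span_scale FV.span_base) auto
  finally show "x \<in> FV.span ((\<lambda>e e'. if e' = e then 1 else 0) ` Q)" .
qed

lemma dim_eq_Suc_dim_coordinate_kernel:
  fixes S :: "('e \<Rightarrow> 'a::field) set"
  assumes "finite Q" "FV.subspace S" "S \<subseteq> fspace Q" "z \<in> S" "z e \<noteq> 0"
  shows "FV.dim S = Suc (FV.dim {x \<in> S. x e = 0})"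
proof -
  let ?K = "{x \<in> S. x e = 0}"
  have "FV.subspace ?K" using assms(2) unfolding FV.subspace_def by auto
  obtain Bs where Bs: "Bs \<subseteq> ?K" "FV.independent Bs" "?K \<subseteq> FV.span Bs" "card Bs = FV.dim ?K"
    using FV.basis_exists by blast
  have "finite Bs"
    using FV.independent_span_bound[OF finite_imageI[OF assms(1)] Bs(2)]
      fspace_subset_span_indicators[OF assms(1)] Bs(1) assms(3) by blast
  have z_notin: "z \<notin> FV.span Bs"
    using FV.span_minimal[OF Bs(1) \<open>FV.subspace ?K\<close>] assms(5) by auto
  have "S \<subseteq> FV.span (insert z Bs)"
  proof
    fix x assume x: "x \<in> S"
    have "x - (\<lambda>y. (x e / z e) * z y) \<in> S"
      by (rule FV.subspace_diff[OF assms(2) x FV.subspace_scale[OF assms(2) assms(4)]])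
    then have "x - (\<lambda>y. (x e / z e) * z y) \<in> ?K"
      using assms(5) by simp
    then show "x \<in> FV.span (insert z Bs)"
      using Bs(3) unfolding FV.span_insert by blast
  qed
  then have "FV.dim S = card (insert z Bs)"
    using Bs(1) assms(4) FV.independent_insertI[OF z_notin Bs(2)] by (intro FV.dim_unique) auto
  then show ?thesis
    using Bs(4) \<open>finite Bs\<close> z_notin FV.span_superset[of Bs] by (auto simp: card_insert_if)
qed

definition edge_rel :: "'e set \<Rightarrow> ('e \<Rightarrow> 'x) \<Rightarrow> ('e \<Rightarrow> 'x) \<Rightarrow> 'x rel" where
  "edge_rel Q s t = {(s e, t e) | e. e \<in> Q} \<union> {(s e, t e) | e. e \<in> Q}\<inverse>"

lemma c_macro_eq_card_quotient: "c_macro Q1 A B = card (vmacro Q1 A B // (edge_rel Q1 A B)\<^sup>*)"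
  by (simp add: c_macro_def edge_rel_def Let_def)

lemma sym_edge_rel: "sym (edge_rel Q s t)"
  by (simp add: edge_rel_def sym_Un_converse)

lemma equiv_rtrancl_edge_rel: "equiv UNIV ((edge_rel Q s t)\<^sup>*)"
  using sym_rtrancl[OF sym_edge_rel] by (auto simp: equiv_def refl_on_def trans_rtrancl)

lemma edge_rel_insert: "edge_rel (insert e Q) s t = edge_rel Q s t \<union> {(s e, t e), (t e, s e)}"
  by (auto simp: edge_rel_def)

lemma rtrancl_edge_rel_cases:
  "(v, w) \<in> (edge_rel Q s t)\<^sup>* \<Longrightarrow> w = v \<or> w \<in> s ` Q \<union> t ` Q"
  by (induction rule: rtrancl_induct) (auto simp: edge_rel_def)

lemma incidence_walk:
  assumes "finite Q" "(a, b) \<in> (edge_rel Q s t)\<^sup>*"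
  shows "\<exists>y \<in> fspace Q. incidence Q s t y = (\<lambda>v. (if v = b then 1 else 0) - (if v = a then (1::'a::field) else 0))"
  using assms(2)
proof (induction rule: rtrancl_induct)
  case base
  show ?case by (intro bexI[of _ 0]) (auto simp: fspace_def incidence_def)
next
  case (step b c)
  obtain y where y: "y \<in> fspace Q"
    "incidence Q s t y = (\<lambda>v. (if v = b then 1 else 0) - (if v = a then (1::'a) else 0))"
    using step.IH by blast
  obtain e and \<sigma> :: 'a where e: "e \<in> Q" "(s e = b \<and> t e = c \<and> \<sigma> = 1) \<or> (s e = c \<and> t e = b \<and> \<sigma> = -1)"
    using step.hyps(2) unfolding edge_rel_def by blast
  let ?y = "y + (\<lambda>e'. if e' = e then \<sigma> else 0)"
  have "?y \<in> fspace Q" using y(1) e(1) by (auto simp: fspace_def)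
  moreover have "incidence Q s t ?y = (\<lambda>v. (if v = c then 1 else 0) - (if v = a then 1 else 0))"
    using e(2) unfolding incidence_add incidence_indicator[OF assms(1) e(1)] y(2)
    by (auto simp: fun_eq_iff)
  ultimately show ?case by blast
qed

definition graph_cycles :: "'e set \<Rightarrow> ('e \<Rightarrow> 'x) \<Rightarrow> ('e \<Rightarrow> 'x) \<Rightarrow> ('e \<Rightarrow> 'a::field) set" where
  "graph_cycles Q s t = {x \<in> fspace Q. incidence Q s t x = 0}"

lemma subspace_graph_cycles: "FV.subspace (graph_cycles Q s t)"
  unfolding FV.subspace_def graph_cycles_def fspace_def
  by (auto simp: incidence_add incidence_scale) (auto simp: incidence_def)

lemma graph_cycles_insert_coordinate_eq_0:
  assumes "e \<notin> F"
  shows "{x \<in> graph_cycles (insert e F) s t. x e = (0::'a::field)} = graph_cycles F s t"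
  using assms unfolding graph_cycles_def fspace_def
  by (auto simp: incidence_insert_coordinate_eq_0; metis)

lemma dim_graph_cycles_insert_closing:
  assumes "finite F" "e \<notin> F" "(s e, t e) \<in> (edge_rel F s t)\<^sup>*"
  shows "FV.dim (graph_cycles (insert e F) s t :: ('e \<Rightarrow> 'a::field) set) =
    Suc (FV.dim (graph_cycles F s t :: ('e \<Rightarrow> 'a) set))"
proof -
  obtain y :: "'e \<Rightarrow> 'a" where y: "y \<in> fspace F"
    "incidence F s t y = (\<lambda>v. (if v = t e then 1 else 0) - (if v = s e then 1 else 0))"
    using incidence_walk[OF assms(1,3)] by blast
  \<comment> \<open>the cycle formed by \<open>e\<close> and the walk \<open>y\<close> traversed backwards\<close>
  define z where "z = (\<lambda>e'. if e' = e then 1 else 0) - y"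
  have "y e = 0" using y(1) assms(2) by (simp add: fspace_def)
  then have "incidence (insert e F) s t z = 0"
    using assms(1) y(2) by (simp add: z_def incidence_diff incidence_indicator incidence_insert_coordinate_eq_0)
  moreover have "z \<in> fspace (insert e F)" using y(1) by (auto simp: z_def fspace_def)
  ultimately have "z \<in> graph_cycles (insert e F) s t" by (simp add: graph_cycles_def)
  moreover have "z e = 1" using \<open>y e = 0\<close> by (simp add: z_def)
  ultimately have "FV.dim (graph_cycles (insert e F) s t :: ('e \<Rightarrow> 'a) set) =
      Suc (FV.dim {x \<in> graph_cycles (insert e F) s t. x e = (0::'a)})"
    using assms(1) subspace_graph_cycles
    by (intro dim_eq_Suc_dim_coordinate_kernel[where Q = "insert e F" and z = z]) (auto simp: graph_cycles_def)
  then show ?thesis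
    by (simp add: graph_cycles_insert_coordinate_eq_0[OF assms(2)])
qed

lemma graph_cycles_insert_bridge:
  assumes "finite F" "e \<notin> F" "(s e, t e) \<notin> (edge_rel F s t)\<^sup>*"
  shows "graph_cycles (insert e F) s t = (graph_cycles F s t :: ('e \<Rightarrow> 'a::field) set)"
proof -
  have "x e = 0" if x: "x \<in> (graph_cycles (insert e F) s t :: ('e \<Rightarrow> 'a) set)" for x
  proof -
    let ?R = "(edge_rel F s t)\<^sup>*"
    \<comment> \<open>the net flow of \<open>x\<close> out of the component \<open>C\<close> of \<open>s e\<close> is carried by \<open>e\<close> alone\<close>
    define C where "C = ?R``{s e}"
    have "C \<subseteq> insert (s e) (s ` F \<union> t ` F)"
      unfolding C_def using rtrancl_edge_rel_cases by fastforce
    then have "finite C" by (rule finite_subset) (simp add: assms(1))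
    have "s e \<in> C" "t e \<notin> C" using assms(3) by (auto simp: C_def)
    have endpoints: "s e' \<in> C \<longleftrightarrow> t e' \<in> C" if "e' \<in> F" for e'
    proof -
      have "(s e', t e') \<in> ?R" using that by (auto simp: edge_rel_def)
      then show ?thesis
        using equiv_rtrancl_edge_rel[of F s t] unfolding C_def equiv_def
        by (meson Image_singleton_iff symD transD)
    qed
    have "0 = (\<Sum>v\<in>C. incidence (insert e F) s t x v)"
      using x by (simp add: graph_cycles_def)
    also have "\<dots> = (\<Sum>e'\<in>insert e F. x e' * ((if t e' \<in> C then 1 else 0) - (if s e' \<in> C then 1 else 0)))"
      using sum_incidence_mult[OF \<open>finite C\<close>, where g = "\<lambda>_. 1"] by simp
    also have "\<dots> = - x e"
      using assms(1,2) \<open>s e \<in> C\<close> \<open>t e \<notin> C\<close> endpoints by (simp add: sum.neutral)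
    finally show ?thesis by simp
  qed
  then show ?thesis
    using graph_cycles_insert_coordinate_eq_0[OF assms(2)] by blast
qed

theorem dim_graph_cycles:
  assumes "finite Q"
  shows "int (FV.dim (graph_cycles Q s t :: ('e \<Rightarrow> 'a::field) set)) =
    int (card Q) - int (card (s ` Q \<union> t ` Q)) + int (card ((s ` Q \<union> t ` Q) // (edge_rel Q s t)\<^sup>*))"
  using assms
proof (induction Q rule: finite_induct)
  case empty
  have "graph_cycles {} s t = {0 :: 'e \<Rightarrow> 'a}"
    by (auto simp: graph_cycles_def fspace_def incidence_def fun_eq_iff)
  then show ?case by (simp add: dim_zero_space)
next
  case (insert e F)
  let ?V = "s ` F \<union> t ` F" and ?R = "(edge_rel F s t)\<^sup>*"
  let ?W = "insert (s e) (insert (t e) ?V)"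
  have W: "s ` insert e F \<union> t ` insert e F = ?W" by auto
  have "finite ?V" using insert.hyps(1) by simp
  have count: "int (card ?W) - int (card (?W // ?R)) = int (card ?V) - int (card (?V // ?R))"
    using card_insert_diff_card_quotient[OF \<open>finite ?V\<close> equiv_rtrancl_edge_rel]
      card_insert_diff_card_quotient[of "insert (t e) ?V", OF _ equiv_rtrancl_edge_rel]
      rtrancl_edge_rel_cases \<open>finite ?V\<close>
    by (metis (no_types, lifting) finite_insert insertCI)
  have card_Q: "card (insert e F) = Suc (card F)" using insert.hyps by simp
  have rel_insert: "(edge_rel (insert e F) s t)\<^sup>* = (edge_rel F s t \<union> {(s e, t e), (t e, s e)})\<^sup>*"
    by (simp add: edge_rel_insert)
  show ?case
  proof (cases "(s e, t e) \<in> ?R")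
    case True
    then have "(edge_rel (insert e F) s t)\<^sup>* = ?R"
      using symD[OF sym_rtrancl[OF sym_edge_rel]] rel_insert
      by (intro rtrancl_subset) (auto simp: edge_rel_insert)
    moreover have "FV.dim (graph_cycles (insert e F) s t :: ('e \<Rightarrow> 'a) set) =
        Suc (FV.dim (graph_cycles F s t :: ('e \<Rightarrow> 'a) set))"
      by (rule dim_graph_cycles_insert_closing[OF insert.hyps True])
    ultimately show ?thesis
      using insert.IH count card_Q W by simp
  next
    case False
    have "card (?W // (edge_rel (insert e F) s t)\<^sup>*) + 1 = card (?W // ?R)"
      unfolding rel_insert using \<open>finite ?V\<close> False
      by (intro card_quotient_rtrancl_insert_sym_edge sym_edge_rel) auto
    moreover have "graph_cycles (insert e F) s t = (graph_cycles F s t :: ('e \<Rightarrow> 'a) set)"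
      by (rule graph_cycles_insert_bridge[OF insert.hyps False])
    ultimately show ?thesis
      using insert.IH count card_Q W by simp
  qed
qed

lemma delta_eq_0_if_disjoint_supports:
  assumes "finite Q1" "disjoint_supports (vmacro Q1 A B)"
  shows "delta Q1 A B = 0"
proof -
  have "Bmacro Q1 A B ` fspace Q1 \<inter> {f \<in> fspace (vmacro Q1 A B). phihat (vmacro Q1 A B) f = 0} = {0}"
    using phihat_Bmacro_eq_0_iff[OF assms]
    by (auto simp: fspace_def Bmacro_def phihat_def intro!: image_eqI[of 0 _ 0])
  then show ?thesis by (simp add: delta_def fdim_def dim_zero_space)
qed

lemma cycle_space_eq_graph_cycles:
  assumes "finite Q1" "disjoint_supports (vmacro Q1 A B)"
  shows "cycle_space Q1 A B = graph_cycles Q1 A B"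
  by (simp add: cycle_space_def graph_cycles_def boundary_eq_phihat_Bmacro[OF assms(1)]
      phihat_Bmacro_eq_0_iff[OF assms] flip: Bmacro_eq_incidence)

theorem theorem4p3:
  fixes Q0 :: "'v set" and Q1 :: "'e set"
    and A B :: "'e \<Rightarrow> ('v, 'a::field) tensor"
  assumes "finite Q0" and "finite Q1"
    and "single_standard_construction Q0 Q1 A B"
  shows "delta Q1 A B = 0 \<and>
         int (fdim (cycle_space Q1 A B)) =
           int (card Q1) - int (card (vmacro Q1 A B)) + int (c_macro Q1 A B)"
proof
  have disjoint: "disjoint_supports (vmacro Q1 A B)"
    by (rule disjoint_supports_vmacro[OF assms(3)])
  then show "delta Q1 A B = 0"
    by (rule delta_eq_0_if_disjoint_supports[OF assms(2)])
  show "int (fdim (cycle_space Q1 A B)) =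
      int (card Q1) - int (card (vmacro Q1 A B)) + int (c_macro Q1 A B)"
    unfolding fdim_def cycle_space_eq_graph_cycles[OF assms(2) disjoint] c_macro_eq_card_quotient
      vmacro_def
    by (rule dim_graph_cycles[OF assms(2)])
qed

end
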